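(* Consider a causal transformer viewed as a message-passing network on token positions $1,\dots,n$, with token representations $h^{(l)}_i\in\mathbb{R}^{k}$ at layer $l$ updated by $$h^{(l+1)}_i=\phi_l\Big(h^{(l)}_i,\ \sum_{j\le i}A^{(l)}_{ij}\,\psi_l\big(h^{(l)}_j\big)\Big),$$ where for every layer $l$: $A^{(l)}\in\mathbb{R}^{n\times n}$ is a lower-triangular, row-stochastic matrix with nonnegative entries that is treated as fixed (independent of the representations $h$); $\psi_l:\mathbb{R}^k\to\mathbb{R}^{k}$ and $\phi_l:\mathbb{R}^k\times\mathbb{R}^k\to\mathbb{R}^k$ are differentiable. Suppose there is a constant $C>0$ such that for all layers $l$ and all arguments, $\|\partial_1\phi_l\|\le C$ and $\|\partial_2\phi_l\|\,\|\nabla\psi_l\|\le C$ (operator norms), where $\partial_1,\partial_2$ denote the Jacobians of $\phi_l$ with respect to its first and second arguments. Then for every layer $L\ge 0$, every $r\ge 0$, and all positions $s\le d$, $$\left\|\frac{\partial h^{(L+r)}_d}{\partial h^{(L)}_s}\right\|\le C^{r}\Big(\prod_{t=0}^{r-1}\big(I+A^{(L+t)}\big)\Big)_{ds},$$ where $I$ is the $n\times n$ identity, the product is ordered with later layers on the left, i.e. $\prod_{t=0}^{r-1}(I+A^{(L+t)})=(I+A^{(L+r-1)})\cdots(I+A^{(L)})$, and the empty product ($r=0$) is $I$.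
   Context: $\|\cdot\|$ denotes the operator norm of a Jacobian matrix. In a standard transformer, $\psi_l(h_j)=h_jW_V$ (value projection), $A^{(l)}_{ij}$ are the causal softmax attention weights, and $\phi_l$ absorbs the residual connection, layer norms and MLP; the theorem is stated under the simplifying assumption that the attention weights do not depend on $h$. *)

theory Defs
  imports "HOL-Analysis.Analysis"
begin

text \<open>Token positions are the elements of a finite linearly ordered type 'n
  (positions 1..n); representations live in real^'k (Euclidean norm, so onorm is
  the spectral operator norm of the Jacobian).\<close>

definition vupd :: "'b^'n \<Rightarrow> 'n \<Rightarrow> 'b \<Rightarrow> 'b^'n" where
  "vupd H s x = (\<chi> i. if i = s then x else H $ i)"

definition partial1 :: "((real^'k) \<times> (real^'k) \<Rightarrow> real^'k) \<Rightarrow> real^'k \<Rightarrow> real^'k \<Rightarrow> (real^'k \<Rightarrow> real^'k)" where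
  "partial1 phi x y = (\<lambda>u. frechet_derivative phi (at (x, y)) (u, 0))"

definition partial2 :: "((real^'k) \<times> (real^'k) \<Rightarrow> real^'k) \<Rightarrow> real^'k \<Rightarrow> real^'k \<Rightarrow> (real^'k \<Rightarrow> real^'k)" where
  "partial2 phi x y = (\<lambda>v. frechet_derivative phi (at (x, y)) (0, v))"

definition layer :: "((real^'k) \<times> (real^'k) \<Rightarrow> real^'k) \<Rightarrow> (real^'k \<Rightarrow> real^'k)
    \<Rightarrow> ((real, 'n::{finite,linorder}) vec, 'n) vec \<Rightarrow> ((real,'k) vec,'n) vec \<Rightarrow> ((real,'k) vec,'n) vec" where
  "layer phi psi A H = (\<chi> i. phi (H $ i, \<Sum>j\<in>{j. j \<le> i}. (A $ i $ j) *\<^sub>R psi (H $ j)))"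

fun run :: "(nat \<Rightarrow> (real^'k) \<times> (real^'k) \<Rightarrow> real^'k) \<Rightarrow> (nat \<Rightarrow> real^'k \<Rightarrow> real^'k)
    \<Rightarrow> (nat \<Rightarrow> ((real, 'n::{finite,linorder}) vec, 'n) vec) \<Rightarrow> nat \<Rightarrow> nat \<Rightarrow> ((real,'k) vec,'n) vec \<Rightarrow> ((real,'k) vec,'n) vec" where
  "run phi psi A L 0 H = H"
| "run phi psi A L (Suc r) H = layer (phi (L + r)) (psi (L + r)) (A (L + r)) (run phi psi A L r H)"

fun prodIA :: "(nat \<Rightarrow> real^'n^'n) \<Rightarrow> nat \<Rightarrow> nat \<Rightarrow> real^'n^'n" where
  "prodIA A L 0 = mat 1"
| "prodIA A L (Suc r) = (mat 1 + A (L + r)) ** prodIA A L r"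

end

theory Submission
  imports Defs
begin

text \<open>The Jacobian is propagated layer by layer with the chain rule. If the Jacobians J j of
  the coordinates of the state with respect to h_s satisfy onorm (J j) <= b j, then the
  Jacobian of coordinate d after one more layer is
  partial1 phi (J d) + partial2 phi (sum over j <= d of A_dj * Dpsi_j (J j)),
  whose norm is at most C * (b d + sum_j A_dj * b j) = C * ((I + A) b)_d.
  Starting from b = e_s, iteration produces the entries of the matrix product.\<close>

definition message :: "(real^'k \<Rightarrow> real^'k) \<Rightarrow> ((real, 'n::{finite,linorder}) vec, 'n) vec
    \<Rightarrow> ((real, 'k) vec, 'n) vec \<Rightarrow> 'n \<Rightarrow> real^'k" where
  "message psi A H i = (\<Sum>j\<in>{j. j \<le> i}. (A $ i $ j) *\<^sub>R psi (H $ j))"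

lemma layer_nth: "layer phi psi A H $ i = phi (H $ i, message psi A H i)"
  by (simp add: layer_def message_def)

lemma bounded_linear_partial1:
  assumes "phi differentiable at (x, y)"
  shows "bounded_linear (partial1 phi x y)"
proof -
  have "bounded_linear (frechet_derivative phi (at (x, y)))"
    using assms frechet_derivative_works has_derivative_bounded_linear by blast
  then show ?thesis
    unfolding partial1_def
    by (rule bounded_linear_compose) (intro bounded_linear_Pair bounded_linear_ident bounded_linear_zero)
qed

lemma bounded_linear_partial2:
  assumes "phi differentiable at (x, y)"
  shows "bounded_linear (partial2 phi x y)"
proof -
  have "bounded_linear (frechet_derivative phi (at (x, y)))"
    using assms frechet_derivative_works has_derivative_bounded_linear by blast
  then show ?thesis
    unfolding partial2_def
    by (rule bounded_linear_compose) (intro bounded_linear_Pair bounded_linear_ident bounded_linear_zero)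
qed

lemma has_derivative_partials:
  assumes "phi differentiable at (x, y)"
  shows "(phi has_derivative (\<lambda>(u, v). partial1 phi x y u + partial2 phi x y v)) (at (x, y))"
proof -
  let ?D = "frechet_derivative phi (at (x, y))"
  have D: "(phi has_derivative ?D) (at (x, y))"
    using assms frechet_derivative_works by blast
  have "(\<lambda>(u, v). partial1 phi x y u + partial2 phi x y v) = ?D"
  proof (intro ext, clarify)
    fix u v
    show "partial1 phi x y u + partial2 phi x y v = ?D (u, v)"
      using linear_add[OF has_derivative_linear[OF D], of "(u, 0)" "(0, v)"]
      by (simp add: partial1_def partial2_def)
  qed
  with D show ?thesis
    by simp
qed

lemma layer_nth_has_derivative:
  fixes G :: "'a::real_normed_vector \<Rightarrow> ((real, 'k::finite) vec, 'n::{finite,linorder}) vec"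
  assumes G: "\<And>j. ((\<lambda>x. G x $ j) has_derivative J j) (at x0)"
    and phi: "phi differentiable at (G x0 $ d, message psi A (G x0) d)"
    and psi: "\<And>j. psi differentiable at (G x0 $ j)"
  shows "((\<lambda>x. layer phi psi A (G x) $ d) has_derivative
      (\<lambda>u. partial1 phi (G x0 $ d) (message psi A (G x0) d) (J d u)
         + partial2 phi (G x0 $ d) (message psi A (G x0) d)
             (\<Sum>j\<in>{j. j \<le> d}. A $ d $ j *\<^sub>R frechet_derivative psi (at (G x0 $ j)) (J j u))))
    (at x0)"
proof -
  have "((\<lambda>x. psi (G x $ j)) has_derivative
      (\<lambda>u. frechet_derivative psi (at (G x0 $ j)) (J j u))) (at x0)" for j
    using G[of j] psi[of j, unfolded frechet_derivative_works] by (rule has_derivative_compose)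
  then have "((\<lambda>x. message psi A (G x) d) has_derivative
      (\<lambda>u. \<Sum>j\<in>{j. j \<le> d}. A $ d $ j *\<^sub>R frechet_derivative psi (at (G x0 $ j)) (J j u))) (at x0)"
    unfolding message_def by (intro has_derivative_sum has_derivative_scaleR_right)
  from has_derivative_compose[OF has_derivative_Pair[OF G[of d] this] has_derivative_partials[OF phi]]
  show ?thesis
    by (simp add: layer_nth)
qed

lemma norm_compose_le_onorm:
  assumes "bounded_linear f" and "bounded_linear g"
  shows "norm (f (g x)) \<le> onorm f * onorm g * norm x"
proof -
  have "norm (f (g x)) \<le> onorm f * norm (g x)"
    using onorm assms(1) by blast
  also have "\<dots> \<le> onorm f * (onorm g * norm x)"
    using onorm[OF assms(2)] onorm_pos_le[OF assms(1)] by (rule mult_left_mono)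
  finally show ?thesis by (simp add: mult.assoc)
qed

lemma onorm_partials_message_le:
  fixes J0 :: "'a::{real_normed_vector,perfect_space} \<Rightarrow> 'b::real_normed_vector"
    and w :: "'j \<Rightarrow> real"
  assumes "finite T"
    and bl: "bounded_linear P1" "bounded_linear P2" "bounded_linear J0"
      "\<And>j. bounded_linear (Q j)" "\<And>j. bounded_linear (J j)"
    and P1: "onorm P1 \<le> C" and P2: "\<And>j. onorm P2 * onorm (Q j) \<le> C"
    and J0: "onorm J0 \<le> b0" and J: "\<And>j. onorm (J j) \<le> b j"
    and w: "\<And>j. 0 \<le> w j"
  shows "onorm (\<lambda>u. P1 (J0 u) + P2 (\<Sum>j\<in>T. w j *\<^sub>R Q j (J j u)))
    \<le> C * (b0 + (\<Sum>j\<in>T. w j * b j))"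
proof (rule onorm_le)
  fix u
  have C: "0 \<le> C"
    using P1 onorm_pos_le[OF bl(1)] by linarith
  have "norm (P1 (J0 u)) \<le> onorm P1 * onorm J0 * norm u"
    by (rule norm_compose_le_onorm[OF bl(1,3)])
  also have "\<dots> \<le> C * b0 * norm u"
    using P1 J0 C onorm_pos_le[OF bl(1)] onorm_pos_le[OF bl(3)]
    by (intro mult_right_mono mult_mono) auto
  finally have first: "norm (P1 (J0 u)) \<le> C * b0 * norm u" .
  have "norm (P2 (Q j (J j u))) \<le> C * b j * norm u" for j
  proof -
    have "norm (P2 (Q j (J j u))) \<le> onorm P2 * onorm (Q j) * norm (J j u)"
      by (rule norm_compose_le_onorm[OF bl(2,4)])
    also have "\<dots> \<le> C * (b j * norm u)"
    proof (rule mult_mono)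
      show "norm (J j u) \<le> b j * norm u"
        using onorm[OF bl(5)] J[of j] by (meson mult_right_mono norm_ge_zero order_trans)
    qed (use P2 C onorm_pos_le[OF bl(2)] onorm_pos_le[OF bl(4)] in auto)
    finally show ?thesis by (simp add: mult.assoc)
  qed
  then have "norm (\<Sum>j\<in>T. w j *\<^sub>R P2 (Q j (J j u))) \<le> (\<Sum>j\<in>T. w j * (C * b j * norm u))"
    using w by (intro order_trans[OF norm_sum sum_mono]) (simp add: mult_left_mono)
  then have second: "norm (P2 (\<Sum>j\<in>T. w j *\<^sub>R Q j (J j u))) \<le> C * (\<Sum>j\<in>T. w j * b j) * norm u"
    by (simp add: linear_sum[OF bounded_linear.linear[OF bl(2)]] linear_scale[OF bounded_linear.linear[OF bl(2)]]
        sum_distrib_left sum_distrib_right algebra_simps)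
  from norm_triangle_le[OF add_mono[OF first second]]
  show "norm (P1 (J0 u) + P2 (\<Sum>j\<in>T. w j *\<^sub>R Q j (J j u))) \<le> C * (b0 + (\<Sum>j\<in>T. w j * b j)) * norm u"
    by (simp add: algebra_simps)
qed

lemma prodIA_Suc_nth:
  "prodIA A L (Suc r) $ d $ s
    = prodIA A L r $ d $ s + (\<Sum>j\<in>UNIV. A (L + r) $ d $ j * prodIA A L r $ j $ s)"
  by (simp add: matrix_matrix_mult_def mat_def distrib_right sum.distrib of_bool_def[symmetric])

lemma run_vupd_nth_has_derivative_bound:
  fixes A :: "nat \<Rightarrow> ((real, 'n::{finite,linorder}) vec, 'n) vec"
    and phi :: "nat \<Rightarrow> (real^'k) \<times> (real^'k) \<Rightarrow> real^'k"
    and psi :: "nat \<Rightarrow> real^'k \<Rightarrow> real^'k"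
    and H :: "((real, 'k) vec, 'n) vec"
  assumes A_nonneg: "\<And>l i j. 0 \<le> A l $ i $ j"
    and phi_diff: "\<And>l p. phi l differentiable (at p)"
    and psi_diff: "\<And>l x. psi l differentiable (at x)"
    and bound1: "\<And>l x y. onorm (partial1 (phi l) x y) \<le> C"
    and bound2: "\<And>l x y z. onorm (partial2 (phi l) x y) * onorm (frechet_derivative (psi l) (at z)) \<le> C"
  shows "\<exists>J. ((\<lambda>x. run phi psi A L r (vupd H s x) $ d) has_derivative J) (at (H $ s))
             \<and> onorm J \<le> C ^ r * (prodIA A L r $ d $ s)"
proof (induction r arbitrary: d)
  case 0
  show ?case
  proof (cases "d = s")
    case True
    then show ?thesis
      by (intro exI[of _ "\<lambda>u. u"]) (auto simp: vupd_def mat_def intro!: onorm_le)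
  next
    case False
    then show ?thesis
      by (intro exI[of _ "\<lambda>u. 0"]) (auto simp: vupd_def mat_def intro!: onorm_le)
  qed
next
  case (Suc r)
  define G where "G x = run phi psi A L r (vupd H s x)" for x
  define b where "b j = C ^ r * prodIA A L r $ j $ s" for j
  obtain J where J: "\<And>j. ((\<lambda>x. G x $ j) has_derivative J j) (at (H $ s))"
    and J_le: "\<And>j. onorm (J j) \<le> b j"
    using Suc.IH unfolding G_def b_def by metis
  have J_bl: "bounded_linear (J j)" for j
    using J by (rule has_derivative_bounded_linear)
  have b_nonneg: "0 \<le> b j" for j
    using onorm_pos_le[OF J_bl] J_le by (rule order_trans)
  have C_nonneg: "0 \<le> C"
    using onorm_pos_le[OF bounded_linear_partial1[OF phi_diff]] bound1 by (rule order_trans)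
  have Q_bl: "bounded_linear (frechet_derivative (psi l) (at z))" for l z
    using psi_diff frechet_derivative_works has_derivative_bounded_linear by blast
  let ?l = "L + r" and ?x0 = "H $ s"
  let ?m = "message (psi ?l) (A ?l) (G ?x0) d"
  let ?Q = "\<lambda>j. frechet_derivative (psi ?l) (at (G ?x0 $ j))"
  let ?J' = "\<lambda>u. partial1 (phi ?l) (G ?x0 $ d) ?m (J d u)
    + partial2 (phi ?l) (G ?x0 $ d) ?m (\<Sum>j\<in>{j. j \<le> d}. A ?l $ d $ j *\<^sub>R ?Q j (J j u))"
  have deriv: "((\<lambda>x. run phi psi A L (Suc r) (vupd H s x) $ d) has_derivative ?J') (at ?x0)"
    using layer_nth_has_derivative[OF J phi_diff psi_diff] by (simp add: G_def)
  have "onorm ?J' \<le> C * (b d + (\<Sum>j\<in>{j. j \<le> d}. A ?l $ d $ j * b j))"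
    by (rule onorm_partials_message_le[OF _ bounded_linear_partial1[OF phi_diff]
          bounded_linear_partial2[OF phi_diff] J_bl Q_bl J_bl bound1 bound2 J_le J_le A_nonneg])
      simp
  also have "\<dots> \<le> C * (b d + (\<Sum>j\<in>UNIV. A ?l $ d $ j * b j))"
    using A_nonneg b_nonneg C_nonneg by (intro mult_left_mono add_left_mono sum_mono2) auto
  also have "\<dots> = C ^ Suc r * prodIA A L (Suc r) $ d $ s"
    unfolding b_def prodIA_Suc_nth by (simp add: algebra_simps sum_distrib_left)
  finally show ?case
    using deriv by blast
qed

theorem theorem3p1:
  fixes A :: "nat \<Rightarrow> ((real, 'n::{finite,linorder}) vec, 'n) vec"
    and phi :: "nat \<Rightarrow> (real^'k) \<times> (real^'k) \<Rightarrow> real^'k"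
    and psi :: "nat \<Rightarrow> real^'k \<Rightarrow> real^'k"
    and C :: real and L r :: nat and s d :: 'n and H :: "((real, 'k) vec, 'n) vec"
  assumes A_nonneg: "\<forall>l i j. 0 \<le> A l $ i $ j"
    and A_lower: "\<forall>l i j. i < j \<longrightarrow> A l $ i $ j = 0"
    and A_stoch: "\<forall>l i. (\<Sum>j\<in>UNIV. A l $ i $ j) = 1"
    and phi_diff: "\<forall>l p. phi l differentiable (at p)"
    and psi_diff: "\<forall>l x. psi l differentiable (at x)"
    and C_pos: "C > 0"
    and bound1: "\<forall>l x y. onorm (partial1 (phi l) x y) \<le> C"
    and bound2: "\<forall>l x y z. onorm (partial2 (phi l) x y) * onorm (frechet_derivative (psi l) (at z)) \<le> C"
    and sd: "s \<le> d"
  shows "\<exists>J. ((\<lambda>x. run phi psi A L r (vupd H s x) $ d) has_derivative J) (at (H $ s))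
             \<and> onorm J \<le> C ^ r * (prodIA A L r $ d $ s)"
  using A_nonneg phi_diff psi_diff bound1 bound2
  by (intro run_vupd_nth_has_derivative_bound) auto

end
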